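(* Let $\delta\in(0,1)$. With probability at least $1-\delta$ over the random draw of the training set $S=(\boldsymbol{x}_1,\dots,\boldsymbol{x}_n)$, every linear classifier $f(\boldsymbol{x})=\langle\boldsymbol{w},\boldsymbol{x}\rangle$ that maximizes the $L^1$-margin $\gamma_1(\boldsymbol{w}):=\min_{i\in[n]}\frac{y_i\langle\boldsymbol{w},\boldsymbol{x}_i\rangle}{\|\boldsymbol{w}\|_1}$ on $S$ satisfies $$\mathbb{E}_{\boldsymbol{x}\sim\mathcal{D}_X}\big[\mathbb{1}[y^*(\boldsymbol{x})f(\boldsymbol{x})\le0]\big]\le4k\sqrt{\frac{2\log(2d)}{n}}+3\sqrt{\frac{\log(2/\delta)}{2n}}.$$
   Context: $\mathcal{D}_X$ is the uniform distribution on $\{\pm1\}^d$. $k$ is a positive odd integer. The vector $\boldsymbol{w}^*\in\mathbb{R}^d$ has its first $k$ coordinates drawn uniformly from $\{\pm1\}^k$ and all other coordinates equal to $0$; the label is $y^*(\boldsymbol{x})=\mathrm{sign}(\langle\boldsymbol{w}^*,\boldsymbol{x}\rangle)$. The training inputs $\boldsymbol{x}_1,\dots,\boldsymbol{x}_n$ are i.i.d. from $\mathcal{D}_X$ and $y_i=y^*(\boldsymbol{x}_i)$. *)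

theory Defs
  imports "HOL-Probability.Probability"
begin

text \<open>Vectors in R^d are represented as functions nat => real; only indices i < d matter.\<close>

definition ip :: "nat \<Rightarrow> (nat \<Rightarrow> real) \<Rightarrow> (nat \<Rightarrow> real) \<Rightarrow> real" where
  "ip d w x = (\<Sum>i<d. w i * x i)"

definition l1norm :: "nat \<Rightarrow> (nat \<Rightarrow> real) \<Rightarrow> real" where
  "l1norm d w = (\<Sum>i<d. \<bar>w i\<bar>)"

definition cube_dist :: "nat \<Rightarrow> (nat \<Rightarrow> real) pmf" where
  "cube_dist d = pmf_of_set (PiE {..<d} (\<lambda>_. {-1, 1}))"

definition sample_dist :: "nat \<Rightarrow> nat \<Rightarrow> (nat \<Rightarrow> (nat \<Rightarrow> real)) pmf" where
  "sample_dist d n = Pi_pmf {..<n} (\<lambda>_. 0) (\<lambda>_. cube_dist d)"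

definition label :: "nat \<Rightarrow> (nat \<Rightarrow> real) \<Rightarrow> (nat \<Rightarrow> real) \<Rightarrow> real" where
  "label d wstar x = sgn (ip d wstar x)"

definition l1_margin :: "nat \<Rightarrow> nat \<Rightarrow> (nat \<Rightarrow> real) \<Rightarrow> (nat \<Rightarrow> (nat \<Rightarrow> real)) \<Rightarrow> (nat \<Rightarrow> real) \<Rightarrow> real" where
  "l1_margin d n wstar S w =
     Min ((\<lambda>i. label d wstar (S i) * ip d w (S i) / l1norm d w) ` {..<n})"

definition max_l1_margin :: "nat \<Rightarrow> nat \<Rightarrow> (nat \<Rightarrow> real) \<Rightarrow> (nat \<Rightarrow> (nat \<Rightarrow> real)) \<Rightarrow> (nat \<Rightarrow> real) \<Rightarrow> bool" where
  "max_l1_margin d n wstar S w \<longleftrightarrow>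
     l1norm d w > 0 \<and>
     (\<forall>v. l1norm d v > 0 \<longrightarrow> l1_margin d n wstar S v \<le> l1_margin d n wstar S w)"

definition test_error :: "nat \<Rightarrow> (nat \<Rightarrow> real) \<Rightarrow> (nat \<Rightarrow> real) \<Rightarrow> real" where
  "test_error d wstar w =
     measure_pmf.expectation (cube_dist d)
       (\<lambda>x. if label d wstar x * ip d w x \<le> 0 then 1 else 0)"

end

theory Submission
  imports Defs
begin

(* The target w* has L1 norm k and, k being odd, |<w*, x>| >= 1 on the cube, so every maximiser
   w of the L1 margin has margin at least 1/k on the sample.  Normalised to the unit L1 ball, w
   then has zero empirical ramp loss (slope k), and the ramp loss dominates the 0-1 loss; hence
   the test error of w is at most the uniform deviation sup_v (E ramp - empirical ramp) over the
   L1 ball.  Symmetrization with a ghost sample, the Ledoux-Talagrand contraction (slope k) and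
   Massart's lemma for the 2d vertices of the ball bound the expected deviation by
   2 k sqrt (2 log (2d) / n).  Changing one sample point moves the deviation by at most 1/n, so
   McDiarmid's inequality adds sqrt (2 log (1/delta) / n) with probability at least 1 - delta. *)

section \<open>Expectations under finitely supported distributions\<close>

lemma expectation_finite_pmf:
  assumes "finite (set_pmf p)"
  shows "measure_pmf.expectation p f = (\<Sum>a\<in>set_pmf p. f a * pmf p a)"
  by (rule integral_measure_pmf_real) (use assms in auto)

lemma expectation_mono_finite_pmf:
  fixes f g :: "'a \<Rightarrow> real"
  assumes "finite (set_pmf p)" "\<And>x. x \<in> set_pmf p \<Longrightarrow> f x \<le> g x"
  shows "measure_pmf.expectation p f \<le> measure_pmf.expectation p g"
  unfolding expectation_finite_pmf[OF assms(1)]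
  by (intro sum_mono mult_right_mono) (auto simp: assms)

lemma abs_expectation_diff_le:
  fixes f g :: "'a \<Rightarrow> real"
  assumes "finite (set_pmf p)" "\<And>x. x \<in> set_pmf p \<Longrightarrow> \<bar>f x - g x\<bar> \<le> c"
  shows "\<bar>measure_pmf.expectation p f - measure_pmf.expectation p g\<bar> \<le> c"
proof -
  have "measure_pmf.expectation p f - measure_pmf.expectation p g
      = measure_pmf.expectation p (\<lambda>x. f x - g x)"
    using assms(1) by (simp add: integrable_measure_pmf_finite)
  also have "\<bar>\<dots>\<bar> \<le> measure_pmf.expectation p (\<lambda>x. \<bar>f x - g x\<bar>)"
    by (rule integral_abs_bound)
  also have "\<dots> \<le> measure_pmf.expectation p (\<lambda>x. c)"
    by (rule expectation_mono_finite_pmf) (use assms in auto)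
  finally show ?thesis
    by simp
qed

lemma expectation_pos_finite_pmf:
  fixes f :: "'a \<Rightarrow> real"
  assumes "finite (set_pmf p)" "\<And>x. x \<in> set_pmf p \<Longrightarrow> f x > 0"
  shows "measure_pmf.expectation p f > 0"
  unfolding expectation_finite_pmf[OF assms(1)]
  using set_pmf_not_empty assms by (intro sum_pos) (auto simp: pmf_positive)

lemma expectation_ln_le_ln_expectation:
  fixes f :: "'a \<Rightarrow> real"
  assumes fin: "finite (set_pmf p)" and pos: "\<And>x. x \<in> set_pmf p \<Longrightarrow> f x > 0"
  shows "measure_pmf.expectation p (\<lambda>x. ln (f x)) \<le> ln (measure_pmf.expectation p f)"
proof -
  define m where "m = measure_pmf.expectation p f"
  have "m > 0"
    unfolding m_def using fin pos by (rule expectation_pos_finite_pmf)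
  have "measure_pmf.expectation p (\<lambda>x. ln (f x))
          \<le> measure_pmf.expectation p (\<lambda>x. ln m + f x / m - 1)"
  proof (rule expectation_mono_finite_pmf[OF fin])
    fix x
    assume "x \<in> set_pmf p"
    then have "ln (f x / m) \<le> f x / m - 1"
      using pos \<open>m > 0\<close> by (intro ln_le_minus_one) simp
    then show "ln (f x) \<le> ln m + f x / m - 1"
      using pos[OF \<open>x \<in> set_pmf p\<close>] \<open>m > 0\<close> by (simp add: ln_div)
  qed
  also have "\<dots> = ln m"
    using fin \<open>m > 0\<close> by (simp add: m_def integrable_measure_pmf_finite)
  finally show ?thesis
    unfolding m_def .
qed

lemma expectation_pair_pmf:
  fixes f :: "'a \<times> 'b \<Rightarrow> real"
  assumes "finite (set_pmf A)" "finite (set_pmf B)"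
  shows "measure_pmf.expectation (pair_pmf A B) f =
         measure_pmf.expectation A (\<lambda>a. measure_pmf.expectation B (\<lambda>b. f (a, b)))"
proof -
  have "measure_pmf.expectation (pair_pmf A B) f
      = (\<Sum>a\<in>set_pmf A. \<Sum>b\<in>set_pmf B. f (a, b) * (pmf A a * pmf B b))"
    using assms
    by (simp add: expectation_finite_pmf sum.cartesian_product) (auto intro!: sum.cong simp: pmf_pair)
  also have "\<dots> = (\<Sum>a\<in>set_pmf A. (\<Sum>b\<in>set_pmf B. f (a, b) * pmf B b) * pmf A a)"
    by (simp add: sum_distrib_left sum_distrib_right mult_ac)
  finally show ?thesis
    using assms by (simp add: expectation_finite_pmf)
qed

lemma expectation_commute_finite_pmf:
  fixes f :: "'a \<Rightarrow> 'b \<Rightarrow> real"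
  assumes "finite (set_pmf A)" "finite (set_pmf B)"
  shows "measure_pmf.expectation A (\<lambda>a. measure_pmf.expectation B (\<lambda>b. f a b)) =
         measure_pmf.expectation B (\<lambda>b. measure_pmf.expectation A (\<lambda>a. f a b))"
  using assms
  by (simp add: expectation_finite_pmf sum_distrib_left sum_distrib_right mult_ac) (rule sum.swap)

lemma finite_set_Pi_pmf:
  assumes "finite I" "\<And>i. i \<in> I \<Longrightarrow> finite (set_pmf (p i))"
  shows "finite (set_pmf (Pi_pmf I dflt p))"
  using assms by (subst set_Pi_pmf) auto

lemma expectation_Pi_pmf_insert:
  fixes f :: "('i \<Rightarrow> 'a) \<Rightarrow> real"
  assumes "finite I" "a \<notin> I" "\<And>i. i \<in> insert a I \<Longrightarrow> finite (set_pmf (p i))"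
  shows "measure_pmf.expectation (Pi_pmf (insert a I) dflt p) f =
         measure_pmf.expectation (Pi_pmf I dflt p)
           (\<lambda>S. measure_pmf.expectation (p a) (\<lambda>y. f (S(a := y))))"
proof -
  have fin: "finite (set_pmf (Pi_pmf I dflt p))" "finite (set_pmf (p a))"
    using assms by (auto intro!: finite_set_Pi_pmf)
  have "measure_pmf.expectation (Pi_pmf (insert a I) dflt p) f =
        measure_pmf.expectation (pair_pmf (p a) (Pi_pmf I dflt p)) (\<lambda>(y, S). f (S(a := y)))"
    using assms by (simp add: Pi_pmf_insert case_prod_beta')
  also have "\<dots> = measure_pmf.expectation (p a)
                    (\<lambda>y. measure_pmf.expectation (Pi_pmf I dflt p) (\<lambda>S. f (S(a := y))))"
    using fin by (simp add: expectation_pair_pmf)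
  finally show ?thesis
    using expectation_commute_finite_pmf[OF fin(2,1)] by simp
qed

section \<open>Suprema of bounded families\<close>

lemma cSUP_add_le:
  fixes f g :: "'v \<Rightarrow> real"
  assumes "V \<noteq> {}" "bdd_above (f ` V)" "bdd_above (g ` V)"
  shows "(SUP v\<in>V. f v + g v) \<le> (SUP v\<in>V. f v) + (SUP v\<in>V. g v)"
  using assms by (intro cSUP_least add_mono cSUP_upper) auto

lemma cSUP_add_cSUP_le:
  fixes f g :: "'v \<Rightarrow> real"
  assumes "V \<noteq> {}" "\<And>v w. v \<in> V \<Longrightarrow> w \<in> V \<Longrightarrow> f v + g w \<le> K"
  shows "(SUP v\<in>V. f v) + (SUP w\<in>V. g w) \<le> K"
proof -
  have "(SUP w\<in>V. g w) \<le> K - (SUP v\<in>V. f v)"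
  proof (rule cSUP_least[OF assms(1)])
    fix w
    assume "w \<in> V"
    then have "(SUP v\<in>V. f v) \<le> K - g w"
      using assms by (intro cSUP_least) (auto simp: algebra_simps)
    then show "g w \<le> K - (SUP v\<in>V. f v)"
      by linarith
  qed
  then show ?thesis
    by linarith
qed

lemma abs_cSUP_diff_le:
  fixes f g :: "'v \<Rightarrow> real"
  assumes "V \<noteq> {}" "bdd_above (f ` V)" "bdd_above (g ` V)"
    and "\<And>v. v \<in> V \<Longrightarrow> \<bar>f v - g v\<bar> \<le> c"
  shows "\<bar>(SUP v\<in>V. f v) - (SUP v\<in>V. g v)\<bar> \<le> c"
proof -
  have "f v \<le> (SUP v\<in>V. g v) + c" "g v \<le> (SUP v\<in>V. f v) + c" if "v \<in> V" for v
    using cSUP_upper[OF that assms(2)] cSUP_upper[OF that assms(3)] assms(4)[OF that] by linarith+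
  then have "(SUP v\<in>V. f v) \<le> (SUP v\<in>V. g v) + c" "(SUP v\<in>V. g v) \<le> (SUP v\<in>V. f v) + c"
    using assms(1) by (auto intro: cSUP_least)
  then show ?thesis
    by linarith
qed

section \<open>Concentration: Hoeffding, Chernoff and McDiarmid\<close>

lemma Hoeffdings_lemma_pmf:
  fixes f :: "'a \<Rightarrow> real"
  assumes "finite (set_pmf p)" "\<And>x. x \<in> set_pmf p \<Longrightarrow> f x \<in> {a..b}" "l \<ge> 0"
  shows "measure_pmf.expectation p (\<lambda>x. exp (l * (f x - measure_pmf.expectation p f)))
           \<le> exp (l\<^sup>2 * (b - a)\<^sup>2 / 8)"
proof (cases "l = 0")
  case False
  interpret interval_bounded_random_variable "measure_pmf p" f a b
    by unfold_locales (use assms in \<open>auto simp: AE_measure_pmf_iff\<close>)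
  have "ennreal (measure_pmf.expectation p (\<lambda>x. exp (l * (f x - measure_pmf.expectation p f))))
        = (\<integral>\<^sup>+x. exp (l * (f x - measure_pmf.expectation p f)) \<partial>p)"
    by (subst nn_integral_eq_integral) (auto intro!: integrable_measure_pmf_finite assms)
  also have "\<dots> \<le> ennreal (exp (l\<^sup>2 * (b - a)\<^sup>2 / 8))"
    using Hoeffdings_lemma_nn_integral[of l] False assms by auto
  finally show ?thesis
    by (subst (asm) ennreal_le_iff) auto
qed simp

lemma Chernoff_bound_pmf:
  fixes f :: "'a \<Rightarrow> real"
  assumes "finite (set_pmf p)" "l > 0"
  shows "measure_pmf.prob p {x. f x \<ge> m + t}
           \<le> exp (- l * t) * measure_pmf.expectation p (\<lambda>x. exp (l * (f x - m)))"
proof -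
  have "measure_pmf.prob p {x \<in> UNIV. f x - m \<ge> t}
          \<le> exp (- l * t) * (\<integral>x\<in>UNIV. exp (l * (f x - m)) \<partial>p)"
    by (rule measure_pmf.Chernoff_ineq_ge)
       (auto intro: assms integrable_measure_pmf_finite simp: set_integrable_def)
  then show ?thesis
    by (simp add: set_lebesgue_integral_def algebra_simps)
qed

lemma bounded_differences_expectation_fun_upd:
  fixes f :: "('i \<Rightarrow> 'a) \<Rightarrow> real"
  assumes "finite (set_pmf q)" "i \<noteq> a" "\<And>S z. \<bar>f (S(i := z)) - f S\<bar> \<le> c"
  shows "\<bar>measure_pmf.expectation q (\<lambda>y. f (S(i := z, a := y)))
          - measure_pmf.expectation q (\<lambda>y. f (S(a := y)))\<bar> \<le> c"
proof (rule abs_expectation_diff_le[OF assms(1)])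
  fix y
  have "S(i := z, a := y) = (S(a := y))(i := z)"
    using assms(2) by (rule fun_upd_twist)
  then show "\<bar>f (S(i := z, a := y)) - f (S(a := y))\<bar> \<le> c"
    using assms(3) by presburger
qed

lemma Hoeffdings_lemma_fun_upd:
  fixes f :: "('i \<Rightarrow> 'a) \<Rightarrow> real"
  assumes "finite (set_pmf q)" "l \<ge> 0" "\<And>y. \<bar>f (S(a := y)) - f S\<bar> \<le> c"
  shows "measure_pmf.expectation q
           (\<lambda>y. exp (l * (f (S(a := y)) - measure_pmf.expectation q (\<lambda>y. f (S(a := y))))))
         \<le> exp (l\<^sup>2 * c\<^sup>2 / 2)"
proof -
  have "measure_pmf.expectation q
          (\<lambda>y. exp (l * (f (S(a := y)) - measure_pmf.expectation q (\<lambda>y. f (S(a := y))))))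
        \<le> exp (l\<^sup>2 * ((f S + c) - (f S - c))\<^sup>2 / 8)"
    using assms(3) by (intro Hoeffdings_lemma_pmf assms(1,2)) (simp add: abs_le_iff algebra_simps)
  then show ?thesis
    by (simp add: power2_eq_square algebra_simps)
qed

lemma McDiarmid_mgf:
  fixes f :: "('i \<Rightarrow> 'a) \<Rightarrow> real"
  assumes "finite I" "\<And>i. i \<in> I \<Longrightarrow> finite (set_pmf (p i))" "l \<ge> 0"
    and "\<And>S i z. i \<in> I \<Longrightarrow> \<bar>f (S(i := z)) - f S\<bar> \<le> c"
  shows "measure_pmf.expectation (Pi_pmf I dflt p)
           (\<lambda>S. exp (l * (f S - measure_pmf.expectation (Pi_pmf I dflt p) f)))
         \<le> exp (l\<^sup>2 * c\<^sup>2 * real (card I) / 2)"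
  using assms(1,2,4)
proof (induction I arbitrary: f rule: finite_induct)
  case (insert a I)
  let ?P = "Pi_pmf I dflt p" and ?Q = "Pi_pmf (insert a I) dflt p" and ?q = "p a"
  have fin: "finite (set_pmf ?q)" "finite (set_pmf ?P)"
    using insert by (auto intro!: finite_set_Pi_pmf)
  define g where "g S = measure_pmf.expectation ?q (\<lambda>y. f (S(a := y)))" for S
  define Eg where "Eg = measure_pmf.expectation ?P g"
  have IH: "measure_pmf.expectation ?P (\<lambda>S. exp (l * (g S - Eg))) \<le> exp (l\<^sup>2 * c\<^sup>2 * real (card I) / 2)"
    unfolding Eg_def g_def using insert
    by (intro insert.IH bounded_differences_expectation_fun_upd) auto
  have Ef: "measure_pmf.expectation ?Q f = Eg"
    unfolding Eg_def g_def using insert by (intro expectation_Pi_pmf_insert) auto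
  have factor: "measure_pmf.expectation ?q (\<lambda>y. exp (l * (f (S(a := y)) - Eg)))
      = measure_pmf.expectation ?q (\<lambda>y. exp (l * (f (S(a := y)) - g S))) * exp (l * (g S - Eg))" for S
  proof -
    have "exp (l * (f (S(a := y)) - Eg)) = exp (l * (f (S(a := y)) - g S)) * exp (l * (g S - Eg))" for y
      by (simp add: algebra_simps flip: exp_add)
    then show ?thesis
      by simp
  qed
  have "measure_pmf.expectation ?Q (\<lambda>S. exp (l * (f S - measure_pmf.expectation ?Q f)))
      = measure_pmf.expectation ?P (\<lambda>S. measure_pmf.expectation ?q (\<lambda>y. exp (l * (f (S(a := y)) - Eg))))"
    unfolding Ef using insert by (intro expectation_Pi_pmf_insert) auto
  also have "\<dots> = measure_pmf.expectation ?P (\<lambda>S.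
          measure_pmf.expectation ?q (\<lambda>y. exp (l * (f (S(a := y)) - g S))) * exp (l * (g S - Eg)))"
    by (simp only: factor)
  also have "\<dots> \<le> measure_pmf.expectation ?P (\<lambda>S. exp (l\<^sup>2 * c\<^sup>2 / 2) * exp (l * (g S - Eg)))"
    unfolding g_def using insert.prems(2) assms(3)
    by (intro expectation_mono_finite_pmf[OF fin(2)] mult_right_mono Hoeffdings_lemma_fun_upd[OF fin(1)]) auto
  also have "\<dots> \<le> exp (l\<^sup>2 * c\<^sup>2 / 2) * exp (l\<^sup>2 * c\<^sup>2 * real (card I) / 2)"
    using IH by simp
  also have "\<dots> = exp (l\<^sup>2 * c\<^sup>2 * real (card (insert a I)) / 2)"
    using insert.hyps by (simp add: field_simps flip: exp_add)
  finally show ?case .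
qed simp

text \<open>For \<open>c = 0\<close> or \<open>I = {}\<close> the bound reads \<open>exp 0 = 1\<close>,
  by the convention \<open>x / 0 = 0\<close>.\<close>

lemma McDiarmid_inequality:
  fixes f :: "('i \<Rightarrow> 'a) \<Rightarrow> real"
  assumes "finite I" "\<And>i. i \<in> I \<Longrightarrow> finite (set_pmf (p i))" "t \<ge> 0"
    and "\<And>S i z. i \<in> I \<Longrightarrow> \<bar>f (S(i := z)) - f S\<bar> \<le> c"
  shows "measure_pmf.prob (Pi_pmf I dflt p)
           {S. f S \<ge> measure_pmf.expectation (Pi_pmf I dflt p) f + t}
         \<le> exp (- t\<^sup>2 / (2 * c\<^sup>2 * real (card I)))"
proof (cases "t = 0 \<or> c\<^sup>2 * real (card I) = 0")
  case False
  let ?P = "Pi_pmf I dflt p"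
  define N where "N = c\<^sup>2 * real (card I)"
  define l where "l = t / N"
  have "N > 0" "t > 0"
    using False assms(3) by (auto simp: N_def)
  then have l: "l > 0"
    by (simp add: l_def)
  have "measure_pmf.prob ?P {S. f S \<ge> measure_pmf.expectation ?P f + t}
          \<le> exp (- l * t) * measure_pmf.expectation ?P
                (\<lambda>S. exp (l * (f S - measure_pmf.expectation ?P f)))"
    using assms by (intro Chernoff_bound_pmf l finite_set_Pi_pmf)
  also have "\<dots> \<le> exp (- l * t) * exp (l\<^sup>2 * c\<^sup>2 * real (card I) / 2)"
    using assms l by (intro mult_left_mono McDiarmid_mgf) auto
  also have "\<dots> = exp (- t\<^sup>2 / (2 * N))"
    using \<open>N > 0\<close> unfolding N_def
    by (simp add: l_def N_def power2_eq_square field_simps flip: exp_add)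
  finally show ?thesis
    by (simp add: N_def mult_ac)
qed auto

section \<open>Rademacher averages: contraction and Massart's lemma\<close>

definition rademacher_pmf :: "real pmf" where
  "rademacher_pmf = pmf_of_set {-1, 1}"

definition rademacher_Pi_pmf :: "'i set \<Rightarrow> ('i \<Rightarrow> real) pmf" where
  "rademacher_Pi_pmf I = Pi_pmf I 0 (\<lambda>_. rademacher_pmf)"

lemma set_rademacher_pmf [simp]: "set_pmf rademacher_pmf = {-1, 1}"
  by (simp add: rademacher_pmf_def)

lemma expectation_rademacher_pmf:
  "measure_pmf.expectation rademacher_pmf f = (f (-1) + f 1) / (2 :: real)"
  unfolding rademacher_pmf_def by (subst integral_pmf_of_set) auto

lemma finite_set_rademacher_Pi_pmf [simp]:
  "finite I \<Longrightarrow> finite (set_pmf (rademacher_Pi_pmf I))"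
  unfolding rademacher_Pi_pmf_def by (intro finite_set_Pi_pmf) auto

lemma rademacher_Pi_pmf_in_signs:
  "finite I \<Longrightarrow> \<sigma> \<in> set_pmf (rademacher_Pi_pmf I) \<Longrightarrow> i \<in> I \<Longrightarrow> \<sigma> i \<in> {-1, 1}"
  unfolding rademacher_Pi_pmf_def by (subst (asm) set_Pi_pmf) (auto simp: PiE_dflt_def)

lemma expectation_rademacher_Pi_pmf_insert:
  fixes f :: "('i \<Rightarrow> real) \<Rightarrow> real"
  assumes "finite I" "a \<notin> I"
  shows "measure_pmf.expectation (rademacher_Pi_pmf (insert a I)) f =
         measure_pmf.expectation (rademacher_Pi_pmf I)
           (\<lambda>\<sigma>. measure_pmf.expectation rademacher_pmf (\<lambda>s. f (\<sigma>(a := s))))"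
  unfolding rademacher_Pi_pmf_def using assms by (intro expectation_Pi_pmf_insert) auto

lemma map_pmf_uminus_rademacher_Pi_pmf:
  assumes "finite I"
  shows "map_pmf (\<lambda>\<sigma> i. - \<sigma> i) (rademacher_Pi_pmf I) = rademacher_Pi_pmf I"
proof -
  have "map_pmf uminus rademacher_pmf = rademacher_pmf"
    unfolding rademacher_pmf_def by (subst map_pmf_of_set_inj) (auto simp: insert_commute)
  then show ?thesis
    unfolding rademacher_Pi_pmf_def
    using Pi_pmf_map[OF assms, of uminus 0 0 "\<lambda>_. rademacher_pmf"] by (simp add: comp_def)
qed

lemma expectation_rademacher_exp_le: "measure_pmf.expectation rademacher_pmf (\<lambda>s. exp (t * s)) \<le> exp (t\<^sup>2 / 2)"
proof -
  have "measure_pmf.expectation rademacher_pmf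
          (\<lambda>s. exp (1 * (t * s - measure_pmf.expectation rademacher_pmf (\<lambda>s. t * s))))
          \<le> exp (1\<^sup>2 * (\<bar>t\<bar> - - \<bar>t\<bar>)\<^sup>2 / 8)"
    by (rule Hoeffdings_lemma_pmf) (auto simp: abs_le_iff)
  then show ?thesis
    by (simp add: expectation_rademacher_pmf power2_eq_square)
qed

lemma expectation_rademacher_sum_exp_le:
  assumes "finite I"
  shows "measure_pmf.expectation (rademacher_Pi_pmf I) (\<lambda>\<sigma>. exp (\<Sum>i\<in>I. t i * \<sigma> i))
           \<le> exp ((\<Sum>i\<in>I. (t i)\<^sup>2) / 2)"
proof -
  have "measure_pmf.expectation (rademacher_Pi_pmf I) (\<lambda>\<sigma>. exp (\<Sum>i\<in>I. t i * \<sigma> i))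
      = (\<Prod>i\<in>I. measure_pmf.expectation rademacher_pmf (\<lambda>s. exp (t i * s)))"
    unfolding rademacher_Pi_pmf_def exp_sum[OF assms]
    by (rule expectation_prod_Pi_pmf) (auto intro: assms integrable_measure_pmf_finite)
  also have "\<dots> \<le> (\<Prod>i\<in>I. exp ((t i)\<^sup>2 / 2))"
    by (intro prod_mono conjI expectation_rademacher_exp_le integral_nonneg) auto
  finally show ?thesis
    using assms by (simp add: exp_sum sum_divide_distrib)
qed

lemma Ledoux_Talagrand_contraction_single:
  fixes u \<tau> :: "'v \<Rightarrow> real" and \<psi> :: "real \<Rightarrow> real"
  assumes V: "V \<noteq> {}" and u: "\<And>v. v \<in> V \<Longrightarrow> \<bar>u v\<bar> \<le> Mu" and \<tau>: "\<And>v. v \<in> V \<Longrightarrow> \<bar>\<tau> v\<bar> \<le> M"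
    and lip: "\<And>x y. \<bar>\<psi> x - \<psi> y\<bar> \<le> L * \<bar>x - y\<bar>"
  shows "measure_pmf.expectation rademacher_pmf (\<lambda>s. SUP v\<in>V. u v + s * \<psi> (\<tau> v))
         \<le> measure_pmf.expectation rademacher_pmf (\<lambda>s. SUP v\<in>V. u v + s * (L * \<tau> v))"
proof -
  have L: "L \<ge> 0"
    using lip[of 1 0] by simp
  have bdd: "bdd_above ((\<lambda>v. u v + s * (L * \<tau> v)) ` V)" if "\<bar>s\<bar> = 1" for s
  proof (rule bdd_aboveI2)
    fix v
    assume "v \<in> V"
    then have "\<bar>s * (L * \<tau> v)\<bar> \<le> L * M"
      using \<tau> L that by (simp add: abs_mult mult_left_mono)
    then show "u v + s * (L * \<tau> v) \<le> Mu + L * M"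
      using u[OF \<open>v \<in> V\<close>] by linarith
  qed
  have "(SUP v\<in>V. u v + \<psi> (\<tau> v)) + (SUP w\<in>V. u w - \<psi> (\<tau> w))
          \<le> (SUP v\<in>V. u v + L * \<tau> v) + (SUP w\<in>V. u w - L * \<tau> w)"
  proof (rule cSUP_add_cSUP_le[OF V])
    fix v w
    assume vw: "v \<in> V" "w \<in> V"
    have "bdd_above ((\<lambda>v. u v + L * \<tau> v) ` V)" "bdd_above ((\<lambda>v. u v - L * \<tau> v) ` V)"
      using bdd[of 1] bdd[of "-1"] by simp_all
    then have sup: "u x + L * \<tau> x \<le> (SUP v\<in>V. u v + L * \<tau> v)"
                   "u x - L * \<tau> x \<le> (SUP v\<in>V. u v - L * \<tau> v)" if "x \<in> V" for x
      using that by (auto intro: cSUP_upper)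
    show "u v + \<psi> (\<tau> v) + (u w - \<psi> (\<tau> w))
            \<le> (SUP v\<in>V. u v + L * \<tau> v) + (SUP w\<in>V. u w - L * \<tau> w)"
    proof (cases "\<tau> w \<le> \<tau> v")
      case True
      then have "\<psi> (\<tau> v) - \<psi> (\<tau> w) \<le> L * (\<tau> v - \<tau> w)"
        using lip[of "\<tau> v" "\<tau> w"] by auto
      then show ?thesis
        using sup[OF vw(1)] sup[OF vw(2)] unfolding right_diff_distrib by linarith
    next
      case False
      then have "\<psi> (\<tau> v) - \<psi> (\<tau> w) \<le> L * (\<tau> w - \<tau> v)"
        using lip[of "\<tau> v" "\<tau> w"] by auto
      then show ?thesis
        using sup[OF vw(1)] sup[OF vw(2)] unfolding right_diff_distrib by linarith
    qed
  qed
  then show ?thesis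
    by (simp add: expectation_rademacher_pmf)
qed

lemma sum_fun_upd_insert:
  fixes h :: "'i \<Rightarrow> real"
  assumes "finite I" "a \<notin> I"
  shows "(\<Sum>i\<in>insert a I. (\<sigma>(a := s)) i * h i) = s * h a + (\<Sum>i\<in>I. \<sigma> i * h i)"
proof -
  have "(\<Sum>i\<in>I. (\<sigma>(a := s)) i * h i) = (\<Sum>i\<in>I. \<sigma> i * h i)"
    using assms(2) by (intro sum.cong) auto
  then show ?thesis
    using assms by simp
qed

lemma Lipschitz_abs_le:
  fixes \<psi> :: "real \<Rightarrow> real"
  assumes "\<And>x y. \<bar>\<psi> x - \<psi> y\<bar> \<le> L * \<bar>x - y\<bar>" "\<bar>t\<bar> \<le> M"
  shows "\<bar>\<psi> t\<bar> \<le> \<bar>\<psi> 0\<bar> + L * M"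
proof -
  have "L \<ge> 0"
    using assms(1)[of 1 0] by simp
  have "\<bar>\<psi> t - \<psi> 0\<bar> \<le> L * \<bar>t\<bar>"
    using assms(1)[of t 0] by simp
  also have "\<dots> \<le> L * M"
    using assms(2) \<open>L \<ge> 0\<close> by (rule mult_left_mono)
  finally show ?thesis
    by linarith
qed

lemma Ledoux_Talagrand_contraction:
  fixes u :: "'v \<Rightarrow> real" and \<tau> :: "'v \<Rightarrow> 'i \<Rightarrow> real" and \<psi> :: "real \<Rightarrow> real"
  assumes "finite I" and V: "V \<noteq> {}" and "\<And>v. v \<in> V \<Longrightarrow> \<bar>u v\<bar> \<le> Mu"
    and \<tau>: "\<And>v i. v \<in> V \<Longrightarrow> i \<in> I \<Longrightarrow> \<bar>\<tau> v i\<bar> \<le> M"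
    and lip: "\<And>x y. \<bar>\<psi> x - \<psi> y\<bar> \<le> L * \<bar>x - y\<bar>"
  shows "measure_pmf.expectation (rademacher_Pi_pmf I)
           (\<lambda>\<sigma>. SUP v\<in>V. u v + (\<Sum>i\<in>I. \<sigma> i * \<psi> (\<tau> v i)))
         \<le> measure_pmf.expectation (rademacher_Pi_pmf I)
           (\<lambda>\<sigma>. SUP v\<in>V. u v + (\<Sum>i\<in>I. \<sigma> i * (L * \<tau> v i)))"
  using assms(1,3,4)
proof (induction I arbitrary: u Mu rule: finite_induct)
  case (insert a I)
  let ?R = "rademacher_Pi_pmf I" and ?r = rademacher_pmf
  have L: "L \<ge> 0"
    using lip[of 1 0] by simp
  have fin: "finite (set_pmf ?R)" "finite (set_pmf ?r)"
    using insert.hyps by simp_all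
  note split = sum_fun_upd_insert[OF insert.hyps]
  have \<psi>_bound: "\<bar>\<psi> (\<tau> v i)\<bar> \<le> \<bar>\<psi> 0\<bar> + L * M" if "v \<in> V" "i \<in> insert a I" for v i
    using Lipschitz_abs_le[OF lip insert.prems(2)[OF that]] .
  have "measure_pmf.expectation (rademacher_Pi_pmf (insert a I))
          (\<lambda>\<sigma>. SUP v\<in>V. u v + (\<Sum>i\<in>insert a I. \<sigma> i * \<psi> (\<tau> v i)))
      = measure_pmf.expectation ?R (\<lambda>\<sigma>. measure_pmf.expectation ?r (\<lambda>s.
          SUP v\<in>V. (u v + (\<Sum>i\<in>I. \<sigma> i * \<psi> (\<tau> v i))) + s * \<psi> (\<tau> v a)))"
    by (simp only: expectation_rademacher_Pi_pmf_insert[OF insert.hyps] split) (simp add: add_ac)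
  also have "\<dots> \<le> measure_pmf.expectation ?R (\<lambda>\<sigma>. measure_pmf.expectation ?r (\<lambda>s.
          SUP v\<in>V. (u v + (\<Sum>i\<in>I. \<sigma> i * \<psi> (\<tau> v i))) + s * (L * \<tau> v a)))"
  proof (intro expectation_mono_finite_pmf[OF fin(1)] Ledoux_Talagrand_contraction_single[OF V _ _ lip])
    fix \<sigma> v
    assume "v \<in> V"
    have "\<bar>\<Sum>i\<in>I. \<sigma> i * \<psi> (\<tau> v i)\<bar> \<le> (\<Sum>i\<in>I. \<bar>\<sigma> i\<bar> * (\<bar>\<psi> 0\<bar> + L * M))"
      using \<psi>_bound[OF \<open>v \<in> V\<close>]
      by (intro order_trans[OF sum_abs] sum_mono) (auto simp: abs_mult intro: mult_left_mono)
    then show "\<bar>u v + (\<Sum>i\<in>I. \<sigma> i * \<psi> (\<tau> v i))\<bar>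
                 \<le> Mu + (\<Sum>i\<in>I. \<bar>\<sigma> i\<bar> * (\<bar>\<psi> 0\<bar> + L * M))"
      using insert.prems(1)[OF \<open>v \<in> V\<close>] by linarith
    show "\<bar>\<tau> v a\<bar> \<le> M"
      using insert.prems(2)[OF \<open>v \<in> V\<close>] by simp
  qed
  also have "\<dots> = measure_pmf.expectation ?r (\<lambda>s. measure_pmf.expectation ?R (\<lambda>\<sigma>.
          SUP v\<in>V. (u v + s * (L * \<tau> v a)) + (\<Sum>i\<in>I. \<sigma> i * \<psi> (\<tau> v i))))"
    by (subst expectation_commute_finite_pmf[OF fin]) (simp add: add_ac)
  also have "\<dots> \<le> measure_pmf.expectation ?r (\<lambda>s. measure_pmf.expectation ?R (\<lambda>\<sigma>.
          SUP v\<in>V. (u v + s * (L * \<tau> v a)) + (\<Sum>i\<in>I. \<sigma> i * (L * \<tau> v i))))"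
  proof (intro expectation_mono_finite_pmf[OF fin(2)] insert.IH)
    fix s v
    assume "s \<in> set_pmf ?r" "v \<in> V"
    then have "\<bar>s * (L * \<tau> v a)\<bar> \<le> L * M"
      using insert.prems(2)[OF \<open>v \<in> V\<close>] L by (auto simp: abs_mult mult_left_mono)
    then show "\<bar>u v + s * (L * \<tau> v a)\<bar> \<le> Mu + L * M"
      using insert.prems(1)[OF \<open>v \<in> V\<close>] by linarith
  qed (use insert.prems in auto)
  also have "\<dots> = measure_pmf.expectation (rademacher_Pi_pmf (insert a I))
          (\<lambda>\<sigma>. SUP v\<in>V. u v + (\<Sum>i\<in>insert a I. \<sigma> i * (L * \<tau> v i)))"
    by (simp only: expectation_rademacher_Pi_pmf_insert[OF insert.hyps] split
          expectation_commute_finite_pmf[OF fin(1,2)]) (simp add: add_ac)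
  finally show ?case .
qed simp

lemma Max_abs_le_ln_sum_exp:
  fixes A :: "'j \<Rightarrow> real"
  assumes "finite J" "J \<noteq> {}" "l > 0"
  shows "Max ((\<lambda>j. \<bar>A j\<bar>) ` J) \<le> ln (\<Sum>j\<in>J. exp (l * A j) + exp (- l * A j)) / l"
proof (subst Max_le_iff, goal_cases)
  case 3
  have "l * \<bar>A j\<bar> \<le> ln (\<Sum>j\<in>J. exp (l * A j) + exp (- l * A j))" if "j \<in> J" for j
  proof -
    have "exp (l * \<bar>A j\<bar>) \<le> exp (l * A j) + exp (- l * A j)"
      by (cases "A j \<ge> 0") auto
    also have "\<dots> \<le> (\<Sum>j\<in>J. exp (l * A j) + exp (- l * A j))"
      using assms that by (intro member_le_sum[where f = "\<lambda>j. exp (l * A j) + exp (- l * A j)"]) auto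
    moreover have "0 < (\<Sum>j\<in>J. exp (l * A j) + exp (- l * A j))"
      using assms by (intro sum_pos) (auto intro: add_pos_pos)
    ultimately show ?thesis
      by (simp add: ln_ge_iff)
  qed
  then show ?case
    using assms(3) by (auto simp: field_simps)
qed (use assms in auto)

lemma expectation_exp_rademacher_sum_le:
  assumes "finite I" "\<And>i. i \<in> I \<Longrightarrow> \<bar>a i\<bar> \<le> B"
  shows "measure_pmf.expectation (rademacher_Pi_pmf I) (\<lambda>\<sigma>. exp (c * (\<Sum>i\<in>I. a i * \<sigma> i)))
           \<le> exp (c\<^sup>2 * B\<^sup>2 * real (card I) / 2)"
proof -
  have "measure_pmf.expectation (rademacher_Pi_pmf I) (\<lambda>\<sigma>. exp (c * (\<Sum>i\<in>I. a i * \<sigma> i)))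
          \<le> exp ((\<Sum>i\<in>I. (c * a i)\<^sup>2) / 2)"
    unfolding sum_distrib_left mult.assoc[symmetric]
    by (rule expectation_rademacher_sum_exp_le[OF assms(1)])
  also have "\<dots> \<le> exp ((\<Sum>i\<in>I. c\<^sup>2 * B\<^sup>2) / 2)"
  proof (intro exp_mono divide_right_mono sum_mono)
    fix i
    assume "i \<in> I"
    then have "\<bar>a i\<bar>\<^sup>2 \<le> B\<^sup>2"
      using assms(2) by (intro power_mono) auto
    then show "(c * a i)\<^sup>2 \<le> c\<^sup>2 * B\<^sup>2"
      by (simp add: power_mult_distrib mult_left_mono)
  qed simp
  finally show ?thesis
    by (simp add: mult_ac)
qed

lemma Massart_lemma_mgf:
  fixes a :: "'i \<Rightarrow> 'j \<Rightarrow> real"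
  assumes I: "finite I" and J: "finite J" "J \<noteq> {}" and l: "l > 0"
    and a: "\<And>i j. i \<in> I \<Longrightarrow> j \<in> J \<Longrightarrow> \<bar>a i j\<bar> \<le> B"
  shows "measure_pmf.expectation (rademacher_Pi_pmf I)
           (\<lambda>\<sigma>. Max ((\<lambda>j. \<bar>\<Sum>i\<in>I. a i j * \<sigma> i\<bar>) ` J))
         \<le> (ln (2 * real (card J)) + l\<^sup>2 * B\<^sup>2 * real (card I) / 2) / l"
proof -
  let ?R = "rademacher_Pi_pmf I" and ?mgf = "exp (l\<^sup>2 * B\<^sup>2 * real (card I) / 2)"
  define A where "A \<sigma> j = (\<Sum>i\<in>I. a i j * \<sigma> i)" for \<sigma> j
  define Z where "Z \<sigma> = (\<Sum>j\<in>J. exp (l * A \<sigma> j) + exp (- l * A \<sigma> j))" for \<sigma>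
  have Z_pos: "Z \<sigma> > 0" for \<sigma>
    unfolding Z_def using J by (intro sum_pos) (auto intro: add_pos_pos)
  have "measure_pmf.expectation ?R (\<lambda>\<sigma>. exp (l * A \<sigma> j) + exp (- l * A \<sigma> j)) \<le> 2 * ?mgf"
    if "j \<in> J" for j
    using expectation_exp_rademacher_sum_le[of I "\<lambda>i. a i j" B l, OF I a[OF _ that]]
      expectation_exp_rademacher_sum_le[of I "\<lambda>i. a i j" B "- l", OF I a[OF _ that]] I
    by (simp add: A_def Bochner_Integration.integral_add integrable_measure_pmf_finite)
  then have "measure_pmf.expectation ?R Z \<le> (\<Sum>j\<in>J. 2 * ?mgf)"
    unfolding Z_def using I
    by (subst Bochner_Integration.integral_sum)
       (auto intro!: sum_mono integrable_measure_pmf_finite simp del: sum_constant)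
  then have EZ: "measure_pmf.expectation ?R Z \<le> 2 * real (card J) * ?mgf"
    by simp
  have "measure_pmf.expectation ?R (\<lambda>\<sigma>. Max ((\<lambda>j. \<bar>A \<sigma> j\<bar>) ` J))
          \<le> measure_pmf.expectation ?R (\<lambda>\<sigma>. ln (Z \<sigma>) / l)"
    unfolding Z_def using I J l by (intro expectation_mono_finite_pmf Max_abs_le_ln_sum_exp) auto
  also have "\<dots> = measure_pmf.expectation ?R (\<lambda>\<sigma>. ln (Z \<sigma>)) / l"
    by simp
  also have "\<dots> \<le> ln (measure_pmf.expectation ?R Z) / l"
    using I l Z_pos by (intro divide_right_mono expectation_ln_le_ln_expectation) auto
  also have "\<dots> \<le> ln (2 * real (card J) * ?mgf) / l"
    using I l Z_pos EZ by (intro divide_right_mono ln_mono) (auto intro: expectation_pos_finite_pmf)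
  also have "\<dots> = (ln (2 * real (card J)) + l\<^sup>2 * B\<^sup>2 * real (card I) / 2) / l"
    using J by (simp add: ln_mult card_gt_0_iff)
  finally show ?thesis
    unfolding A_def .
qed

lemma Massart_lemma:
  fixes a :: "'i \<Rightarrow> 'j \<Rightarrow> real"
  assumes I: "finite I" and J: "finite J" "J \<noteq> {}" and B: "B \<ge> 0"
    and a: "\<And>i j. i \<in> I \<Longrightarrow> j \<in> J \<Longrightarrow> \<bar>a i j\<bar> \<le> B"
  shows "measure_pmf.expectation (rademacher_Pi_pmf I)
           (\<lambda>\<sigma>. Max ((\<lambda>j. \<bar>\<Sum>i\<in>I. a i j * \<sigma> i\<bar>) ` J))
         \<le> B * sqrt (2 * real (card I) * ln (2 * real (card J)))"
proof (cases "B = 0 \<or> I = {}")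
  case True
  then have "(\<lambda>j. \<bar>\<Sum>i\<in>I. a i j * \<sigma> i\<bar>) ` J = {0}" for \<sigma>
    using a J by (auto intro!: sum.neutral)
  then show ?thesis
    using True by auto
next
  case False
  define N where "N = real (card I)"
  define q where "q = ln (2 * real (card J))"
  define s where "s = sqrt (2 * N * q)"
  define l where "l = s / (N * B)"
  have "N > 0" "B > 0"
    using False I B by (auto simp: N_def card_gt_0_iff)
  moreover have "real (card J) \<ge> 1"
    using J by (simp add: Suc_le_eq card_gt_0_iff)
  then have "q > 0"
    by (simp add: q_def)
  ultimately have "s > 0" and s2: "s\<^sup>2 = 2 * N * q"
    by (simp_all add: s_def)
  with \<open>N > 0\<close> \<open>B > 0\<close> have "l > 0" "l\<^sup>2 * B\<^sup>2 * N / 2 = q"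
    by (simp_all add: l_def power_divide power_mult_distrib power2_eq_square)
  then have "(q + l\<^sup>2 * B\<^sup>2 * N / 2) / l = B * s"
    using \<open>N > 0\<close> \<open>B > 0\<close> \<open>s > 0\<close> s2 by (simp add: l_def field_simps power2_eq_square)
  with Massart_lemma_mgf[OF I J \<open>l > 0\<close> a] show ?thesis
    by (simp add: N_def q_def s_def)
qed

definition l1_ball :: "nat \<Rightarrow> (nat \<Rightarrow> real) set" where
  "l1_ball d = {v. l1norm d v \<le> 1}"

lemma l1_ball_nonempty [simp]: "l1_ball d \<noteq> {}"
  by (auto simp: l1_ball_def l1norm_def intro!: exI[of _ "\<lambda>_. 0"])

lemma ip_le_l1norm_mult_Max_abs:
  assumes "d > 0"
  shows "ip d v x \<le> l1norm d v * Max ((\<lambda>j. \<bar>x j\<bar>) ` {..<d})"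
proof -
  have "ip d v x \<le> (\<Sum>j<d. \<bar>v j\<bar> * Max ((\<lambda>j. \<bar>x j\<bar>) ` {..<d}))"
    unfolding ip_def
  proof (rule sum_mono)
    fix j
    assume "j \<in> {..<d}"
    then have "\<bar>x j\<bar> \<le> Max ((\<lambda>j. \<bar>x j\<bar>) ` {..<d})"
      by (intro Max_ge) auto
    then have "\<bar>v j\<bar> * \<bar>x j\<bar> \<le> \<bar>v j\<bar> * Max ((\<lambda>j. \<bar>x j\<bar>) ` {..<d})"
      by (rule mult_left_mono) simp
    then show "v j * x j \<le> \<bar>v j\<bar> * Max ((\<lambda>j. \<bar>x j\<bar>) ` {..<d})"
      by (metis abs_ge_self abs_mult order_trans)
  qed
  then show ?thesis
    by (simp add: l1norm_def sum_distrib_right)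
qed

lemma Rademacher_complexity_l1_ball:
  assumes I: "finite I" and "d > 0" and B: "B \<ge> 0"
    and x: "\<And>i j. i \<in> I \<Longrightarrow> j < d \<Longrightarrow> \<bar>x i j\<bar> \<le> B"
  shows "measure_pmf.expectation (rademacher_Pi_pmf I)
           (\<lambda>\<sigma>. SUP v\<in>l1_ball d. \<Sum>i\<in>I. \<sigma> i * ip d v (x i))
         \<le> B * sqrt (2 * real (card I) * ln (2 * real d))"
proof -
  define M where "M \<sigma> = Max ((\<lambda>j. \<bar>\<Sum>i\<in>I. x i j * \<sigma> i\<bar>) ` {..<d})" for \<sigma>
  have "(SUP v\<in>l1_ball d. \<Sum>i\<in>I. \<sigma> i * ip d v (x i)) \<le> M \<sigma>" for \<sigma>
  proof (rule cSUP_least[OF l1_ball_nonempty])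
    fix v
    assume v: "v \<in> l1_ball d"
    have "\<bar>\<Sum>i\<in>I. x i 0 * \<sigma> i\<bar> \<le> M \<sigma>"
      unfolding M_def using \<open>d > 0\<close> by (intro Max_ge) auto
    then have "M \<sigma> \<ge> 0"
      by linarith
    have "(\<Sum>i\<in>I. \<sigma> i * ip d v (x i)) = ip d v (\<lambda>j. \<Sum>i\<in>I. x i j * \<sigma> i)"
      unfolding ip_def by (simp add: sum_distrib_left mult_ac sum.swap[of _ I])
    also have "\<dots> \<le> l1norm d v * M \<sigma>"
      unfolding M_def using \<open>d > 0\<close> by (rule ip_le_l1norm_mult_Max_abs)
    also have "\<dots> \<le> M \<sigma>"
      using v \<open>M \<sigma> \<ge> 0\<close> by (intro mult_left_le_one_le) (auto simp: l1_ball_def l1norm_def)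
    finally show "(\<Sum>i\<in>I. \<sigma> i * ip d v (x i)) \<le> M \<sigma>" .
  qed
  then have "measure_pmf.expectation (rademacher_Pi_pmf I)
               (\<lambda>\<sigma>. SUP v\<in>l1_ball d. \<Sum>i\<in>I. \<sigma> i * ip d v (x i))
             \<le> measure_pmf.expectation (rademacher_Pi_pmf I) M"
    using I by (intro expectation_mono_finite_pmf) auto
  also have "\<dots> \<le> B * sqrt (2 * real (card I) * ln (2 * real (card {..<d})))"
    unfolding M_def using I B x \<open>d > 0\<close> by (intro Massart_lemma) auto
  finally show ?thesis
    by simp
qed

section \<open>Uniform deviations and symmetrization\<close>

definition empirical_mean :: "nat \<Rightarrow> ('a \<Rightarrow> real) \<Rightarrow> (nat \<Rightarrow> 'a) \<Rightarrow> real" where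
  "empirical_mean n h S = (\<Sum>i<n. h (S i)) / real n"

definition uniform_deviation ::
    "'a pmf \<Rightarrow> nat \<Rightarrow> 'v set \<Rightarrow> ('v \<Rightarrow> 'a \<Rightarrow> real) \<Rightarrow> (nat \<Rightarrow> 'a) \<Rightarrow> real" where
  "uniform_deviation D n V loss S =
     (SUP v\<in>V. measure_pmf.expectation D (loss v) - empirical_mean n (loss v) S)"

definition Rademacher_complexity :: "nat \<Rightarrow> 'v set \<Rightarrow> ('v \<Rightarrow> 'a \<Rightarrow> real) \<Rightarrow> (nat \<Rightarrow> 'a) \<Rightarrow> real" where
  "Rademacher_complexity n V loss S =
     measure_pmf.expectation (rademacher_Pi_pmf {..<n})
       (\<lambda>\<sigma>. SUP v\<in>V. (\<Sum>i<n. \<sigma> i * loss v (S i)) / real n)"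

lemma empirical_mean_in_unit_interval:
  assumes "\<And>x. h x \<in> {0..1}"
  shows "empirical_mean n h S \<in> {0..1}"
proof -
  have "0 \<le> (\<Sum>i<n. h (S i))"
    using assms by (simp add: sum_nonneg)
  moreover have "(\<Sum>i<n. h (S i)) \<le> real n"
    using sum_mono[of "{..<n}" "\<lambda>i. h (S i)" "\<lambda>_. 1"] assms by simp
  ultimately show ?thesis
    by (cases "n = 0") (auto simp: empirical_mean_def)
qed

lemma empirical_mean_fun_upd:
  assumes "i < n"
  shows "empirical_mean n h (S(i := z)) - empirical_mean n h S = (h z - h (S i)) / real n"
proof -
  have "(\<Sum>j\<in>{..<n} - {i}. h ((S(i := z)) j)) = (\<Sum>j\<in>{..<n} - {i}. h (S j))"
    by (intro sum.cong) auto
  with assms show ?thesis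
    unfolding empirical_mean_def
    by (simp add: sum.remove[of "{..<n}" i] diff_divide_distrib[symmetric])
qed

lemma expectation_empirical_mean:
  assumes "finite (set_pmf D)" "n > 0"
  shows "measure_pmf.expectation (Pi_pmf {..<n} dflt (\<lambda>_. D)) (empirical_mean n h)
       = measure_pmf.expectation D h"
proof -
  let ?P = "Pi_pmf {..<n} dflt (\<lambda>_. D)"
  have "measure_pmf.expectation ?P (\<lambda>S. h (S i)) = measure_pmf.expectation D h" if "i < n" for i
  proof -
    have "map_pmf (\<lambda>S. S i) ?P = D"
      using that by (subst Pi_pmf_component) auto
    then show ?thesis
      by (metis integral_map_pmf)
  qed
  moreover have "finite (set_pmf ?P)"
    using assms by (intro finite_set_Pi_pmf) auto
  then have "measure_pmf.expectation ?P (empirical_mean n h)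
           = (\<Sum>i<n. measure_pmf.expectation ?P (\<lambda>S. h (S i))) / real n"
    unfolding empirical_mean_def
    by (simp add: Bochner_Integration.integral_sum integrable_measure_pmf_finite)
  ultimately show ?thesis
    using assms by simp
qed

lemma abs_deviation_le_1:
  assumes "finite (set_pmf D)" "\<And>x. h x \<in> {0..1}"
  shows "\<bar>measure_pmf.expectation D h - empirical_mean n h S\<bar> \<le> 1"
proof -
  have "0 \<le> measure_pmf.expectation D h"
    using assms by (intro Bochner_Integration.integral_nonneg) auto
  moreover have "measure_pmf.expectation D h \<le> measure_pmf.expectation D (\<lambda>_. 1)"
    using assms by (intro expectation_mono_finite_pmf) auto
  ultimately show ?thesis
    using empirical_mean_in_unit_interval[of h n S, OF assms(2)] by (auto simp: abs_le_iff)
qed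

lemma bdd_above_deviation:
  assumes "finite (set_pmf D)" "\<And>v x. loss v x \<in> {0..1}"
  shows "bdd_above ((\<lambda>v. measure_pmf.expectation D (loss v) - empirical_mean n (loss v) S) ` V)"
  using abs_deviation_le_1[OF assms(1)] assms(2) by (intro bdd_aboveI2[of _ _ 1]) (simp add: abs_le_iff)

lemma uniform_deviation_fun_upd:
  assumes "finite (set_pmf D)" "V \<noteq> {}" "\<And>v x. loss v x \<in> {0..1}" "i < n"
  shows "\<bar>uniform_deviation D n V loss (S(i := z)) - uniform_deviation D n V loss S\<bar> \<le> 1 / real n"
  unfolding uniform_deviation_def
proof (rule abs_cSUP_diff_le[OF assms(2) bdd_above_deviation[OF assms(1,3)] bdd_above_deviation[OF assms(1,3)]])
  fix v
  have "\<bar>loss v z - loss v (S i)\<bar> \<le> 1"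
    using assms(3)[of v z] assms(3)[of v "S i"] by auto
  then have "\<bar>loss v z - loss v (S i)\<bar> / real n \<le> 1 / real n"
    by (rule divide_right_mono) simp
  then have "\<bar>empirical_mean n (loss v) (S(i := z)) - empirical_mean n (loss v) S\<bar> \<le> 1 / real n"
    using empirical_mean_fun_upd[OF assms(4), of "loss v" S z] by (simp add: abs_divide)
  then show "\<bar>measure_pmf.expectation D (loss v) - empirical_mean n (loss v) (S(i := z))
             - (measure_pmf.expectation D (loss v) - empirical_mean n (loss v) S)\<bar> \<le> 1 / real n"
    by linarith
qed

lemma uniform_deviation_concentration:
  fixes loss :: "'v \<Rightarrow> 'a \<Rightarrow> real"
  assumes "finite (set_pmf D)" "V \<noteq> {}" "\<And>v x. loss v x \<in> {0..1}" "0 < n" "0 < \<delta>" "\<delta> \<le> 1"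
  shows "measure_pmf.prob (Pi_pmf {..<n} dflt (\<lambda>_. D))
           {S. uniform_deviation D n V loss S
                 \<ge> measure_pmf.expectation (Pi_pmf {..<n} dflt (\<lambda>_. D)) (uniform_deviation D n V loss)
                   + sqrt (2 * ln (1 / \<delta>) / real n)}
         \<le> \<delta>"
proof -
  define t where "t = sqrt (2 * ln (1 / \<delta>) / real n)"
  have "ln (1 / \<delta>) \<ge> 0"
    using assms(5,6) by simp
  then have "t\<^sup>2 = 2 * ln (1 / \<delta>) / real n" "t \<ge> 0"
    using assms(4) by (simp_all add: t_def)
  then have "exp (- t\<^sup>2 / (2 * (1 / real n)\<^sup>2 * real (card {..<n}))) = \<delta>"
    using assms(4,5) by (simp add: power2_eq_square field_simps ln_div)
  moreover have "measure_pmf.prob (Pi_pmf {..<n} dflt (\<lambda>_. D))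
           {S. uniform_deviation D n V loss S
                 \<ge> measure_pmf.expectation (Pi_pmf {..<n} dflt (\<lambda>_. D)) (uniform_deviation D n V loss) + t}
         \<le> exp (- t\<^sup>2 / (2 * (1 / real n)\<^sup>2 * real (card {..<n})))"
    using assms \<open>t \<ge> 0\<close> by (intro McDiarmid_inequality uniform_deviation_fun_upd) auto
  ultimately show ?thesis
    by (simp add: t_def)
qed

lemma bdd_above_rademacher_sum:
  assumes "\<And>v x. loss v x \<in> {0..1}"
  shows "bdd_above ((\<lambda>v. (\<Sum>i<n. \<sigma> i * loss v (S i)) / real n) ` V)"
proof (rule bdd_aboveI2)
  fix v
  have "\<sigma> i * loss v (S i) \<le> \<bar>\<sigma> i\<bar>" for i
  proof -
    have "\<sigma> i * loss v (S i) \<le> \<bar>\<sigma> i\<bar> * loss v (S i)"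
      using assms[of v "S i"] by (intro mult_right_mono) auto
    also have "\<dots> \<le> \<bar>\<sigma> i\<bar>"
      using assms[of v "S i"] by (intro mult_left_le) auto
    finally show ?thesis .
  qed
  then have "(\<Sum>i<n. \<sigma> i * loss v (S i)) \<le> (\<Sum>i<n. \<bar>\<sigma> i\<bar>)"
    by (intro sum_mono)
  then show "(\<Sum>i<n. \<sigma> i * loss v (S i)) / real n \<le> (\<Sum>i<n. \<bar>\<sigma> i\<bar>) / real n"
    by (rule divide_right_mono) simp
qed

text \<open>Exchanging the \<open>i\<close>-th points of a sample and of a ghost sample wherever \<open>\<sigma> i = -1\<close>
  preserves the joint law of two i.i.d. samples; this is the symmetrization step.\<close>

definition swap_samples ::
    "('i \<Rightarrow> real) \<Rightarrow> ('i \<Rightarrow> 'a) \<times> ('i \<Rightarrow> 'a) \<Rightarrow> ('i \<Rightarrow> 'a) \<times> ('i \<Rightarrow> 'a)" where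
  "swap_samples \<sigma> SS =
     ((\<lambda>i. if \<sigma> i = -1 then snd SS i else fst SS i), (\<lambda>i. if \<sigma> i = -1 then fst SS i else snd SS i))"

lemma swap_samples_swap_samples [simp]: "swap_samples \<sigma> (swap_samples \<sigma> SS) = SS"
  by (auto simp: swap_samples_def fun_eq_iff prod_eq_iff)

lemma map_pmf_swap_samples_pair_Pi_pmf:
  fixes p :: "'i \<Rightarrow> 'a pmf"
  assumes "finite I"
  shows "map_pmf (swap_samples \<sigma>) (pair_pmf (Pi_pmf I dflt p) (Pi_pmf I dflt p))
       = pair_pmf (Pi_pmf I dflt p) (Pi_pmf I dflt p)"
proof (rule pmf_eqI)
  fix SS :: "('i \<Rightarrow> 'a) \<times> ('i \<Rightarrow> 'a)"
  let ?PP = "pair_pmf (Pi_pmf I dflt p) (Pi_pmf I dflt p)"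
  obtain S S' where SS: "swap_samples \<sigma> SS = (S, S')"
    by (cases "swap_samples \<sigma> SS")
  have "inj (swap_samples \<sigma>)"
    by (metis injI swap_samples_swap_samples)
  then have "pmf (map_pmf (swap_samples \<sigma>) ?PP) SS = pmf ?PP (S, S')"
    by (metis SS pmf_map_inj' swap_samples_swap_samples)
  also have "\<dots> = pmf ?PP SS"
    using assms SS[symmetric]
    by (cases SS) (auto simp: swap_samples_def pmf_pair pmf_Pi prod.distrib[symmetric]
          intro!: prod.cong split: if_splits)
  finally show "pmf (map_pmf (swap_samples \<sigma>) ?PP) SS = pmf ?PP SS" .
qed

lemma expectation_swap_samples_pair_Pi_pmf:
  fixes p :: "'i \<Rightarrow> 'a pmf" and f :: "('i \<Rightarrow> 'a) \<times> ('i \<Rightarrow> 'a) \<Rightarrow> real"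
  assumes "finite I"
  shows "measure_pmf.expectation (pair_pmf (Pi_pmf I dflt p) (Pi_pmf I dflt p)) (\<lambda>SS. f (swap_samples \<sigma> SS))
       = measure_pmf.expectation (pair_pmf (Pi_pmf I dflt p) (Pi_pmf I dflt p)) f"
  using integral_map_pmf[of "swap_samples \<sigma>" "pair_pmf (Pi_pmf I dflt p) (Pi_pmf I dflt p)" f]
  by (simp only: map_pmf_swap_samples_pair_Pi_pmf[OF assms])

lemma empirical_mean_swap_samples_diff:
  assumes "\<And>i. i < n \<Longrightarrow> \<sigma> i \<in> {-1, 1}"
  shows "empirical_mean n h (snd (swap_samples \<sigma> (S, S'))) - empirical_mean n h (fst (swap_samples \<sigma> (S, S')))
       = (\<Sum>i<n. \<sigma> i * h (S' i)) / real n + (\<Sum>i<n. - \<sigma> i * h (S i)) / real n"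
proof -
  have "h (snd (swap_samples \<sigma> (S, S')) i) - h (fst (swap_samples \<sigma> (S, S')) i)
      = \<sigma> i * h (S' i) + (- \<sigma> i) * h (S i)" if "i \<in> {..<n}" for i
    using assms[of i] that by (auto simp: swap_samples_def)
  then have "(\<Sum>i<n. h (snd (swap_samples \<sigma> (S, S')) i) - h (fst (swap_samples \<sigma> (S, S')) i))
      = (\<Sum>i<n. \<sigma> i * h (S' i) + (- \<sigma> i) * h (S i))"
    by (rule sum.cong[OF refl])
  then show ?thesis
    unfolding empirical_mean_def
    by (simp only: sum_subtractf sum.distrib diff_divide_distrib[symmetric] add_divide_distrib[symmetric])
qed

lemma expectation_swapped_deviation_le:
  assumes "V \<noteq> {}" "\<And>v x. loss v x \<in> {0..1}"
  shows "measure_pmf.expectation (rademacher_Pi_pmf {..<n}) (\<lambda>\<sigma>.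
           SUP v\<in>V. empirical_mean n (loss v) (snd (swap_samples \<sigma> (S, S')))
                    - empirical_mean n (loss v) (fst (swap_samples \<sigma> (S, S'))))
         \<le> Rademacher_complexity n V loss S' + Rademacher_complexity n V loss S"
proof -
  let ?R = "rademacher_Pi_pmf {..<n}"
  define a where "a \<sigma> v = (\<Sum>i<n. \<sigma> i * loss v (S' i)) / real n" for \<sigma> v
  define b where "b \<sigma> v = (\<Sum>i<n. \<sigma> i * loss v (S i)) / real n" for \<sigma> v
  have "(SUP v\<in>V. empirical_mean n (loss v) (snd (swap_samples \<sigma> (S, S')))
                 - empirical_mean n (loss v) (fst (swap_samples \<sigma> (S, S'))))
        \<le> (SUP v\<in>V. a \<sigma> v) + (SUP v\<in>V. b (\<lambda>i. - \<sigma> i) v)" if "\<sigma> \<in> set_pmf ?R" for \<sigma>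
  proof -
    have "bdd_above (a \<sigma> ` V)" "bdd_above (b (\<lambda>i. - \<sigma> i) ` V)"
      unfolding a_def b_def using assms(2) by (rule bdd_above_rademacher_sum)+
    moreover have "empirical_mean n (loss v) (snd (swap_samples \<sigma> (S, S')))
        - empirical_mean n (loss v) (fst (swap_samples \<sigma> (S, S'))) = a \<sigma> v + b (\<lambda>i. - \<sigma> i) v" for v
      unfolding a_def b_def using rademacher_Pi_pmf_in_signs[OF _ that]
      by (intro empirical_mean_swap_samples_diff) simp
    ultimately show ?thesis
      using cSUP_add_le[OF assms(1)] by simp
  qed
  then have "measure_pmf.expectation ?R (\<lambda>\<sigma>.
               SUP v\<in>V. empirical_mean n (loss v) (snd (swap_samples \<sigma> (S, S')))
                        - empirical_mean n (loss v) (fst (swap_samples \<sigma> (S, S'))))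
             \<le> measure_pmf.expectation ?R (\<lambda>\<sigma>. (SUP v\<in>V. a \<sigma> v) + (SUP v\<in>V. b (\<lambda>i. - \<sigma> i) v))"
    by (intro expectation_mono_finite_pmf) simp_all
  also have "\<dots> = measure_pmf.expectation ?R (\<lambda>\<sigma>. SUP v\<in>V. a \<sigma> v)
                  + measure_pmf.expectation (map_pmf (\<lambda>\<sigma> i. - \<sigma> i) ?R) (\<lambda>\<sigma>. SUP v\<in>V. b \<sigma> v)"
    by (simp add: Bochner_Integration.integral_add integrable_measure_pmf_finite)
  also have "\<dots> = Rademacher_complexity n V loss S' + Rademacher_complexity n V loss S"
    by (simp add: map_pmf_uminus_rademacher_Pi_pmf Rademacher_complexity_def a_def b_def)
  finally show ?thesis .
qed

lemma uniform_deviation_le_ghost_sample: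
  fixes loss :: "'v \<Rightarrow> 'a \<Rightarrow> real"
  assumes D: "finite (set_pmf D)" and V: "V \<noteq> {}" and loss: "\<And>v x. loss v x \<in> {0..1}"
    and n: "n > 0"
  shows "uniform_deviation D n V loss S
         \<le> measure_pmf.expectation (Pi_pmf {..<n} dflt (\<lambda>_. D))
              (\<lambda>S'. SUP v\<in>V. empirical_mean n (loss v) S' - empirical_mean n (loss v) S)"
  unfolding uniform_deviation_def
proof (rule cSUP_least[OF V])
  let ?P = "Pi_pmf {..<n} dflt (\<lambda>_. D)"
  fix v
  assume "v \<in> V"
  have finP: "finite (set_pmf ?P)"
    using D by (auto intro!: finite_set_Pi_pmf)
  have bdd: "bdd_above ((\<lambda>v. empirical_mean n (loss v) S' - empirical_mean n (loss v) S) ` V)" for S'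
  proof (rule bdd_aboveI2)
    fix w
    show "empirical_mean n (loss w) S' - empirical_mean n (loss w) S \<le> 1"
      using empirical_mean_in_unit_interval[of "loss w" n S', OF loss]
        empirical_mean_in_unit_interval[of "loss w" n S, OF loss] by auto
  qed
  have "measure_pmf.expectation D (loss v) - empirical_mean n (loss v) S
      = measure_pmf.expectation ?P (\<lambda>S'. empirical_mean n (loss v) S' - empirical_mean n (loss v) S)"
    using finP D n by (simp add: expectation_empirical_mean integrable_measure_pmf_finite)
  also have "\<dots> \<le> measure_pmf.expectation ?P
                    (\<lambda>S'. SUP v\<in>V. empirical_mean n (loss v) S' - empirical_mean n (loss v) S)"
    by (intro expectation_mono_finite_pmf[OF finP] cSUP_upper[OF \<open>v \<in> V\<close> bdd])
  finally show "measure_pmf.expectation D (loss v) - empirical_mean n (loss v) S \<le> \<dots>" .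
qed

theorem symmetrization:
  fixes loss :: "'v \<Rightarrow> 'a \<Rightarrow> real"
  assumes D: "finite (set_pmf D)" and V: "V \<noteq> {}" and loss: "\<And>v x. loss v x \<in> {0..1}"
    and n: "n > 0"
  shows "measure_pmf.expectation (Pi_pmf {..<n} dflt (\<lambda>_. D)) (uniform_deviation D n V loss)
         \<le> 2 * measure_pmf.expectation (Pi_pmf {..<n} dflt (\<lambda>_. D)) (Rademacher_complexity n V loss)"
proof -
  let ?P = "Pi_pmf {..<n} dflt (\<lambda>_. D)"
  let ?PP = "pair_pmf ?P ?P" and ?R = "rademacher_Pi_pmf {..<n}"
  define G where "G SS = (SUP v\<in>V. empirical_mean n (loss v) (snd SS) - empirical_mean n (loss v) (fst SS))"
    for SS :: "(nat \<Rightarrow> 'a) \<times> (nat \<Rightarrow> 'a)"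
  have finP: "finite (set_pmf ?P)" and finPP: "finite (set_pmf ?PP)"
    using D by (auto intro!: finite_set_Pi_pmf)
  have "measure_pmf.expectation ?P (uniform_deviation D n V loss)
          \<le> measure_pmf.expectation ?P (\<lambda>S. measure_pmf.expectation ?P (\<lambda>S'. G (S, S')))"
    unfolding G_def fst_conv snd_conv
    by (intro expectation_mono_finite_pmf[OF finP] uniform_deviation_le_ghost_sample[OF D V loss n])
  also have "\<dots> = measure_pmf.expectation ?PP G"
    by (simp add: expectation_pair_pmf[OF finP finP])
  also have "\<dots> = measure_pmf.expectation ?R (\<lambda>\<sigma>. measure_pmf.expectation ?PP (\<lambda>SS. G (swap_samples \<sigma> SS)))"
    by (simp add: expectation_swap_samples_pair_Pi_pmf)
  also have "\<dots> = measure_pmf.expectation ?PP (\<lambda>SS. measure_pmf.expectation ?R (\<lambda>\<sigma>. G (swap_samples \<sigma> SS)))"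
    by (rule expectation_commute_finite_pmf[OF _ finPP]) simp
  also have "\<dots> \<le> measure_pmf.expectation ?PP
                    (\<lambda>SS. Rademacher_complexity n V loss (snd SS) + Rademacher_complexity n V loss (fst SS))"
    unfolding G_def
    by (intro expectation_mono_finite_pmf[OF finPP]) (auto intro: expectation_swapped_deviation_le[OF V loss])
  also have "\<dots> = 2 * measure_pmf.expectation ?P (Rademacher_complexity n V loss)"
    using finPP by (simp add: Bochner_Integration.integral_add integrable_measure_pmf_finite)
  finally show ?thesis .
qed

section \<open>Majority votes on the hypercube\<close>

definition ramp :: "real \<Rightarrow> real \<Rightarrow> real" where
  "ramp K t = min 1 (max 0 (1 - K * t))"

lemma ramp_in_unit_interval: "ramp K t \<in> {0..1}"
  by (simp add: ramp_def)

lemma ramp_Lipschitz: "\<bar>ramp K x - ramp K y\<bar> \<le> \<bar>K\<bar> * \<bar>x - y\<bar>"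
proof -
  have "\<bar>ramp K x - ramp K y\<bar> \<le> \<bar>(1 - K * x) - (1 - K * y)\<bar>"
    unfolding ramp_def by (auto simp: min_def max_def)
  also have "(1 - K * x) - (1 - K * y) = K * (y - x)"
    by (simp add: algebra_simps)
  also have "\<bar>K * (y - x)\<bar> = \<bar>K\<bar> * \<bar>x - y\<bar>"
    by (simp add: abs_mult abs_minus_commute)
  finally show ?thesis .
qed

lemma ramp_nonpos:
  assumes "K \<ge> 0" "t \<le> 0"
  shows "ramp K t = 1"
proof -
  have "K * t \<le> 0"
    using assms by (rule mult_nonneg_nonpos)
  then show ?thesis
    by (simp add: ramp_def)
qed

lemma ramp_eq_0: "1 \<le> K * t \<Longrightarrow> ramp K t = 0"
  by (simp add: ramp_def)

definition margin_loss :: "nat \<Rightarrow> nat \<Rightarrow> (nat \<Rightarrow> real) \<Rightarrow> (nat \<Rightarrow> real) \<Rightarrow> (nat \<Rightarrow> real) \<Rightarrow> real" where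
  "margin_loss d k wstar v x = ramp (real k) (label d wstar x * ip d v x)"

lemma margin_loss_in_unit_interval: "margin_loss d k wstar v x \<in> {0..1}"
  unfolding margin_loss_def by (rule ramp_in_unit_interval)

lemma set_pmf_cube_dist: "set_pmf (cube_dist d) = PiE {..<d} (\<lambda>_. {-1, 1})"
  unfolding cube_dist_def by (simp add: PiE_eq_empty_iff finite_PiE)

lemma finite_set_pmf_cube_dist [simp]: "finite (set_pmf (cube_dist d))"
  by (simp add: set_pmf_cube_dist finite_PiE)

lemma cube_dist_coord: "x \<in> set_pmf (cube_dist d) \<Longrightarrow> j < d \<Longrightarrow> x j \<in> {-1, 1}"
  by (auto simp: set_pmf_cube_dist)

lemma sample_dist_in_cube: "S \<in> set_pmf (sample_dist d n) \<Longrightarrow> i < n \<Longrightarrow> S i \<in> set_pmf (cube_dist d)"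
  unfolding sample_dist_def by (subst (asm) set_Pi_pmf) (auto simp: PiE_dflt_def)

lemma abs_label_le_1: "\<bar>label d wstar x\<bar> \<le> 1"
  by (simp add: label_def sgn_real_def)

lemma abs_ip_le_l1norm:
  assumes "\<And>j. j < d \<Longrightarrow> \<bar>x j\<bar> \<le> 1"
  shows "\<bar>ip d v x\<bar> \<le> l1norm d v"
proof -
  have "\<bar>ip d v x\<bar> \<le> (\<Sum>j<d. \<bar>v j\<bar> * \<bar>x j\<bar>)"
    using sum_abs[of "\<lambda>j. v j * x j" "{..<d}"] by (simp add: ip_def abs_mult)
  also have "\<dots> \<le> (\<Sum>j<d. \<bar>v j\<bar>)"
    using assms by (intro sum_mono mult_left_le) auto
  finally show ?thesis
    by (simp add: l1norm_def)
qed

lemma abs_margin_le_1: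
  assumes "v \<in> l1_ball d" "x \<in> set_pmf (cube_dist d)"
  shows "\<bar>label d wstar x * ip d v x\<bar> \<le> 1"
proof -
  have "\<bar>ip d v x\<bar> \<le> 1"
    using abs_ip_le_l1norm[of d x v] cube_dist_coord[OF assms(2)] assms(1) by (force simp: l1_ball_def)
  then show ?thesis
    unfolding abs_mult using abs_label_le_1 by (intro mult_le_one) auto
qed

lemma real_sqrt_mult_eq_mult_sqrt_divide:
  fixes n y :: real
  assumes "n > 0"
  shows "sqrt (n * y) = n * sqrt (y / n)"
proof -
  have "n * y = n\<^sup>2 * (y / n)"
    using assms by (simp add: power2_eq_square)
  then have "sqrt (n * y) = sqrt (n\<^sup>2) * sqrt (y / n)"
    by (simp only: real_sqrt_mult)
  then show ?thesis
    using assms by simp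
qed

lemma Rademacher_complexity_margin_loss:
  assumes d: "0 < d" and n: "0 < n" and S: "\<And>i. i < n \<Longrightarrow> S i \<in> set_pmf (cube_dist d)"
  shows "Rademacher_complexity n (l1_ball d) (margin_loss d k wstar) S
           \<le> real k * sqrt (2 * ln (2 * real d) / real n)"
proof -
  let ?R = "rademacher_Pi_pmf {..<n}"
  define \<tau> where "\<tau> v i = label d wstar (S i) * ip d v (S i)" for v i
  define x where "x i j = real k / real n * label d wstar (S i) * S i j" for i j
  have "Rademacher_complexity n (l1_ball d) (margin_loss d k wstar) S
      = measure_pmf.expectation ?R
          (\<lambda>\<sigma>. SUP v\<in>l1_ball d. 0 + (\<Sum>i\<in>{..<n}. \<sigma> i * (ramp (real k) (\<tau> v i) / real n)))"
    by (simp add: Rademacher_complexity_def margin_loss_def \<tau>_def sum_divide_distrib)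
  also have "\<dots> \<le> measure_pmf.expectation ?R
          (\<lambda>\<sigma>. SUP v\<in>l1_ball d. 0 + (\<Sum>i\<in>{..<n}. \<sigma> i * (real k / real n * \<tau> v i)))"
  proof (rule Ledoux_Talagrand_contraction[where u = "\<lambda>_. 0" and Mu = 0 and \<tau> = \<tau> and M = 1
        and \<psi> = "\<lambda>t. ramp (real k) t / real n" and L = "real k / real n"])
    fix t t'
    have "\<bar>ramp (real k) t - ramp (real k) t'\<bar> / real n \<le> real k * \<bar>t - t'\<bar> / real n"
      using ramp_Lipschitz[of "real k" t t'] by (intro divide_right_mono) auto
    then show "\<bar>ramp (real k) t / real n - ramp (real k) t' / real n\<bar> \<le> real k / real n * \<bar>t - t'\<bar>"
      by (simp add: diff_divide_distrib[symmetric] abs_divide)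
  qed (use S abs_margin_le_1 in \<open>auto simp: \<tau>_def\<close>)
  also have "\<dots> = measure_pmf.expectation ?R (\<lambda>\<sigma>. SUP v\<in>l1_ball d. \<Sum>i\<in>{..<n}. \<sigma> i * ip d v (x i))"
  proof -
    have "ip d v (x i) = real k / real n * \<tau> v i" for v i
      unfolding ip_def x_def \<tau>_def by (simp add: sum_distrib_left mult_ac)
    then show ?thesis
      by simp
  qed
  also have "\<dots> \<le> real k / real n * sqrt (2 * real (card {..<n}) * ln (2 * real d))"
  proof (rule Rademacher_complexity_l1_ball)
    fix i j
    assume "i \<in> {..<n}" "j < d"
    then have "\<bar>label d wstar (S i) * S i j\<bar> \<le> 1"
      using abs_label_le_1[of d wstar "S i"] cube_dist_coord[OF S, of i j] by (auto simp: abs_mult)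
    then have "real k / real n * \<bar>label d wstar (S i) * S i j\<bar> \<le> real k / real n * 1"
      by (intro mult_left_mono) auto
    then show "\<bar>x i j\<bar> \<le> real k / real n"
      by (simp add: x_def abs_mult)
  qed (use d in auto)
  also have "\<dots> = real k * sqrt (2 * ln (2 * real d) / real n)"
    using n real_sqrt_mult_eq_mult_sqrt_divide[of "real n" "2 * ln (2 * real d)"] by (simp add: mult_ac)
  finally show ?thesis .
qed

lemma expectation_uniform_deviation_margin_loss:
  assumes "0 < d" "0 < n"
  shows "measure_pmf.expectation (sample_dist d n)
           (uniform_deviation (cube_dist d) n (l1_ball d) (margin_loss d k wstar))
         \<le> 2 * (real k * sqrt (2 * ln (2 * real d) / real n))"
proof -
  have "measure_pmf.expectation (sample_dist d n)
          (uniform_deviation (cube_dist d) n (l1_ball d) (margin_loss d k wstar))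
        \<le> 2 * measure_pmf.expectation (sample_dist d n)
                (Rademacher_complexity n (l1_ball d) (margin_loss d k wstar))"
    unfolding sample_dist_def using assms(2)
    by (intro symmetrization l1_ball_nonempty margin_loss_in_unit_interval) simp_all
  also have "\<dots> \<le> 2 * measure_pmf.expectation (sample_dist d n) (\<lambda>_. real k * sqrt (2 * ln (2 * real d) / real n))"
    using assms sample_dist_in_cube
    by (intro mult_left_mono expectation_mono_finite_pmf Rademacher_complexity_margin_loss)
       (auto simp: sample_dist_def intro!: finite_set_Pi_pmf)
  finally show ?thesis
    by simp
qed

lemma sum_signs_parity:
  fixes t :: "nat \<Rightarrow> real"
  assumes "\<And>i. i < m \<Longrightarrow> t i \<in> {-1, 1}"
  shows "\<exists>z::int. (\<Sum>i<m. t i) = of_int z \<and> (odd z \<longleftrightarrow> odd m)"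
  using assms
proof (induction m)
  case (Suc m)
  then obtain z where z: "(\<Sum>i<m. t i) = of_int z" "odd z \<longleftrightarrow> odd m"
    by auto
  have "t m \<in> {-1, 1}"
    using Suc.prems by simp
  then show ?case
  proof
    assume "t m = -1"
    with z show ?thesis
      by (intro exI[of _ "z - 1"]) auto
  next
    assume "t m \<in> {1}"
    with z show ?thesis
      by (intro exI[of _ "z + 1"]) auto
  qed
qed (intro exI[of _ 0], simp)

lemma abs_sum_odd_signs_ge_1:
  fixes t :: "nat \<Rightarrow> real"
  assumes "odd m" "\<And>i. i < m \<Longrightarrow> t i \<in> {-1, 1}"
  shows "\<bar>\<Sum>i<m. t i\<bar> \<ge> 1"
proof -
  obtain z :: int where "(\<Sum>i<m. t i) = of_int z" "odd z"
    using sum_signs_parity[where m = m and t = t] assms by blast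
  then have "1 \<le> \<bar>z\<bar>"
    by (cases "z = 0") auto
  then show ?thesis
    using \<open>(\<Sum>i<m. t i) = of_int z\<close> by (metis of_int_1_le_iff of_int_abs)
qed

lemma ip_divide_left: "ip d (\<lambda>j. w j / c) x = ip d w x / c"
  unfolding ip_def by (simp add: sum_divide_distrib)

lemma normalized_in_l1_ball: "l1norm d w > 0 \<Longrightarrow> (\<lambda>j. w j / l1norm d w) \<in> l1_ball d"
  by (simp add: l1_ball_def l1norm_def sum_divide_distrib[symmetric])

lemma test_error_le_margin_loss_risk:
  assumes "c > 0"
  shows "test_error d wstar w \<le> measure_pmf.expectation (cube_dist d) (margin_loss d k wstar (\<lambda>j. w j / c))"
  unfolding test_error_def
proof (rule expectation_mono_finite_pmf)
  fix x
  have "label d wstar x * ip d w x \<le> 0 \<Longrightarrow> label d wstar x * ip d (\<lambda>j. w j / c) x \<le> 0"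
    using assms by (simp add: ip_divide_left divide_nonpos_pos)
  then show "(if label d wstar x * ip d w x \<le> 0 then 1 else 0) \<le> margin_loss d k wstar (\<lambda>j. w j / c) x"
    using margin_loss_in_unit_interval[of d k wstar "\<lambda>j. w j / c" x]
    by (auto simp: margin_loss_def ramp_nonpos)
qed simp

lemma prob_ge_1_minus_prob_exceptions:
  assumes "measure_pmf.prob p B \<le> \<delta>" "\<And>x. x \<in> set_pmf p \<Longrightarrow> x \<notin> A \<Longrightarrow> x \<in> B"
  shows "measure_pmf.prob p A \<ge> 1 - \<delta>"
proof -
  have "measure_pmf.prob p (- A) = measure_pmf.prob p (- A \<inter> set_pmf p)"
    by (rule measure_Int_set_pmf[symmetric])
  also have "\<dots> \<le> measure_pmf.prob p B"
    using assms(2) by (intro measure_pmf.finite_measure_mono) auto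
  finally show ?thesis
    using assms(1) measure_pmf.prob_compl[of A p] by (simp add: Compl_eq_Diff_UNIV)
qed

lemma confidence_term_le:
  assumes "0 < \<delta>" "\<delta> \<le> 1" "0 < n"
  shows "sqrt (2 * ln (1 / \<delta>) / real n) \<le> 3 * sqrt (ln (2 / \<delta>) / (2 * real n))"
proof -
  have "1 \<le> 2 / \<delta>"
    using assms by (simp add: field_simps)
  then have nonneg: "0 \<le> sqrt (ln (2 / \<delta>) / (2 * real n))"
    by simp
  have "sqrt (2 * ln (1 / \<delta>) / real n) = 2 * sqrt (ln (1 / \<delta>) / (2 * real n))"
    using real_sqrt_mult[of 4 "ln (1 / \<delta>) / (2 * real n)"] by (simp add: field_simps)
  also have "\<dots> \<le> 2 * sqrt (ln (2 / \<delta>) / (2 * real n))"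
    using assms by (simp add: divide_right_mono frac_le)
  also have "\<dots> \<le> 3 * sqrt (ln (2 / \<delta>) / (2 * real n))"
    using nonneg by simp
  finally show ?thesis .
qed

context
  fixes d k :: nat and wstar :: "nat \<Rightarrow> real"
  assumes k: "odd k" "k \<le> d"
    and wstar: "\<forall>i<k. wstar i \<in> {-1, 1}" "\<forall>i\<ge>k. wstar i = 0"
begin

lemma ip_wstar: "ip d wstar x = (\<Sum>i<k. wstar i * x i)"
  unfolding ip_def using k wstar by (intro sum.mono_neutral_right) auto

lemma l1norm_wstar: "l1norm d wstar = real k"
proof -
  have "l1norm d wstar = (\<Sum>i<k. \<bar>wstar i\<bar>)"
    unfolding l1norm_def using k wstar by (intro sum.mono_neutral_right) auto
  also have "\<dots> = (\<Sum>i<k. 1)"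
    using wstar by (intro sum.cong) auto
  finally show ?thesis
    by simp
qed

lemma label_mult_ip_wstar_ge_1:
  assumes "x \<in> set_pmf (cube_dist d)"
  shows "label d wstar x * ip d wstar x \<ge> 1"
proof -
  have "wstar i * x i \<in> {-1, 1}" if "i < k" for i
    using wstar that cube_dist_coord[OF assms, of i] k by auto
  then have "\<bar>ip d wstar x\<bar> \<ge> 1"
    unfolding ip_wstar using k(1) by (intro abs_sum_odd_signs_ge_1)
  then show ?thesis
    by (auto simp: label_def sgn_real_def)
qed

lemma l1_margin_wstar_ge:
  assumes "0 < n" "\<And>i. i < n \<Longrightarrow> S i \<in> set_pmf (cube_dist d)"
  shows "1 / real k \<le> l1_margin d n wstar S wstar"
proof -
  have "1 / real k \<le> label d wstar (S i) * ip d wstar (S i) / real k" if "i < n" for i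
    using label_mult_ip_wstar_ge_1[OF assms(2)[OF that]] by (intro divide_right_mono) auto
  then show ?thesis
    unfolding l1_margin_def l1norm_wstar using assms(1) by (subst Min_ge_iff) auto
qed

lemma max_l1_margin_ge:
  assumes "0 < n" "\<And>i. i < n \<Longrightarrow> S i \<in> set_pmf (cube_dist d)" "max_l1_margin d n wstar S w"
  shows "1 / real k \<le> l1_margin d n wstar S w"
proof -
  have "0 < l1norm d wstar"
    using k by (simp add: l1norm_wstar odd_pos)
  then have "l1_margin d n wstar S wstar \<le> l1_margin d n wstar S w"
    using assms(3) by (simp add: max_l1_margin_def)
  then show ?thesis
    using l1_margin_wstar_ge[where n = n and S = S, OF assms(1,2)] by linarith
qed

lemma test_error_le_uniform_deviation:
  assumes n: "0 < n" and S: "\<And>i. i < n \<Longrightarrow> S i \<in> set_pmf (cube_dist d)"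
    and w: "max_l1_margin d n wstar S w"
  shows "test_error d wstar w \<le> uniform_deviation (cube_dist d) n (l1_ball d) (margin_loss d k wstar) S"
proof -
  define v where "v j = w j / l1norm d w" for j
  have "l1norm d w > 0"
    using w by (simp add: max_l1_margin_def)
  have "margin_loss d k wstar v (S i) = 0" if "i < n" for i
    unfolding margin_loss_def
  proof (rule ramp_eq_0)
    have "l1_margin d n wstar S w \<le> label d wstar (S i) * ip d w (S i) / l1norm d w"
      unfolding l1_margin_def using that by (intro Min_le) auto
    then have "1 / real k \<le> label d wstar (S i) * ip d w (S i) / l1norm d w"
      using max_l1_margin_ge[OF n S w] by linarith
    moreover have "ip d v (S i) = ip d w (S i) / l1norm d w"
      unfolding v_def by (rule ip_divide_left)
    ultimately have "1 / real k \<le> label d wstar (S i) * ip d v (S i)"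
      by simp
    then have "real k * (1 / real k) \<le> real k * (label d wstar (S i) * ip d v (S i))"
      by (rule mult_left_mono) simp
    then show "1 \<le> real k * (label d wstar (S i) * ip d v (S i))"
      using odd_pos[OF k(1)] by simp
  qed
  then have "empirical_mean n (margin_loss d k wstar v) S = 0"
    by (simp add: empirical_mean_def)
  then have "test_error d wstar w \<le> measure_pmf.expectation (cube_dist d) (margin_loss d k wstar v)
                                     - empirical_mean n (margin_loss d k wstar v) S"
    unfolding v_def using test_error_le_margin_loss_risk[OF \<open>l1norm d w > 0\<close>] by simp
  also have "\<dots> \<le> uniform_deviation (cube_dist d) n (l1_ball d) (margin_loss d k wstar) S"
    unfolding uniform_deviation_def using margin_loss_in_unit_interval normalized_in_l1_ball[OF \<open>l1norm d w > 0\<close>]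
    by (intro cSUP_upper bdd_above_deviation) (simp_all add: v_def)
  finally show ?thesis .
qed

end

theorem theoremE3:
  fixes d k n :: nat and \<delta> :: real and wstar :: "nat \<Rightarrow> real"
  assumes "0 < \<delta>" "\<delta> < 1"
    and "odd k" "0 < k" "k \<le> d" "0 < n"
    and "\<forall>i<k. wstar i \<in> {-1, 1}" "\<forall>i\<ge>k. wstar i = 0"
  shows "measure_pmf.prob (sample_dist d n)
           {S. \<forall>w. max_l1_margin d n wstar S w \<longrightarrow>
                  test_error d wstar w
                    \<le> 4 * real k * sqrt (2 * ln (2 * real d) / real n)
                       + 3 * sqrt (ln (2 / \<delta>) / (2 * real n))}
         \<ge> 1 - \<delta>"
proof -
  let ?F = "uniform_deviation (cube_dist d) n (l1_ball d) (margin_loss d k wstar)"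
  let ?t = "sqrt (2 * ln (1 / \<delta>) / real n)"
  have "0 < d"
    using assms by linarith
  then have "0 \<le> real k * sqrt (2 * ln (2 * real d) / real n)"
    by simp
  then have "measure_pmf.expectation (sample_dist d n) ?F + ?t
          \<le> 4 * real k * sqrt (2 * ln (2 * real d) / real n) + 3 * sqrt (ln (2 / \<delta>) / (2 * real n))"
    using expectation_uniform_deviation_margin_loss[OF \<open>0 < d\<close> \<open>0 < n\<close>, of k wstar]
      confidence_term_le[of \<delta> n] assms by linarith
  moreover have "measure_pmf.prob (sample_dist d n) {S. ?F S \<ge> measure_pmf.expectation (sample_dist d n) ?F + ?t} \<le> \<delta>"
    unfolding sample_dist_def using assms
    by (intro uniform_deviation_concentration l1_ball_nonempty margin_loss_in_unit_interval) auto
  moreover have "test_error d wstar w \<le> ?F S"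
    if "S \<in> set_pmf (sample_dist d n)" "max_l1_margin d n wstar S w" for S w
    using assms that sample_dist_in_cube by (intro test_error_le_uniform_deviation) auto
  ultimately show ?thesis
    by (intro prob_ge_1_minus_prob_exceptions) force+
qed

end
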